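(* Let $k>1$ and let $f:\mathbb{R}\to\mathbb{R}$ be a positive, continuously differentiable function, and consider the planar system $$\frac{dI}{d\tau}=I\,[f(R)(1-I-R)-k],\qquad \frac{dR}{d\tau}=(k-1)I-R.$$ If $f(0)/k<1$ and $(0,0)$ is the only equilibrium point of this system, then $(0,0)$ is globally stable.
   Context: Here "globally stable" means: $(0,0)$ is locally asymptotically stable and every solution with initial condition $(I(0),R(0))$ in the region $Z=\{(I,R): 0\le I\le 1,\ 0\le R\le 1,\ I+R\le 1\}$ (the region corresponding to meaningful population proportions, which is positively invariant) converges to $(0,0)$ as $\tau\to\infty$. *)

theory Defs
  imports "HOL-Analysis.Analysis"
begin

definition sys_sol :: "(real \<Rightarrow> real) \<Rightarrow> real \<Rightarrow> (real \<Rightarrow> real) \<Rightarrow> (real \<Rightarrow> real) \<Rightarrow> real set \<Rightarrow> bool" where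
  "sys_sol f k I R S \<longleftrightarrow>
     (\<forall>t\<in>S. (I has_real_derivative (I t * (f (R t) * (1 - I t - R t) - k))) (at t within S)
          \<and> (R has_real_derivative ((k - 1) * I t - R t)) (at t within S))"

definition is_equilibrium :: "(real \<Rightarrow> real) \<Rightarrow> real \<Rightarrow> real \<times> real \<Rightarrow> bool" where
  "is_equilibrium f k p \<longleftrightarrow>
     fst p * (f (snd p) * (1 - fst p - snd p) - k) = 0 \<and> (k - 1) * fst p - snd p = 0"

definition Zreg :: "(real \<times> real) set" where
  "Zreg = {(i, r). 0 \<le> i \<and> i \<le> 1 \<and> 0 \<le> r \<and> r \<le> 1 \<and> i + r \<le> 1}"

definition origin_stable :: "(real \<Rightarrow> real) \<Rightarrow> real \<Rightarrow> bool" where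
  "origin_stable f k \<longleftrightarrow>
     (\<forall>\<epsilon>>0. \<exists>\<delta>>0. \<forall>I R T. sys_sol f k I R {0..T} \<and> norm (I 0, R 0) < \<delta>
        \<longrightarrow> (\<forall>t\<in>{0..T}. norm (I t, R t) < \<epsilon>))"

definition origin_attractive :: "(real \<Rightarrow> real) \<Rightarrow> real \<Rightarrow> bool" where
  "origin_attractive f k \<longleftrightarrow>
     (\<exists>\<delta>>0. \<forall>I R. sys_sol f k I R {0..} \<and> norm (I 0, R 0) < \<delta>
        \<longrightarrow> ((\<lambda>t. (I t, R t)) \<longlongrightarrow> (0, 0)) at_top)"

definition origin_las :: "(real \<Rightarrow> real) \<Rightarrow> real \<Rightarrow> bool" where
  "origin_las f k \<longleftrightarrow> origin_stable f k \<and> origin_attractive f k"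

definition origin_globally_stable :: "(real \<Rightarrow> real) \<Rightarrow> real \<Rightarrow> bool" where
  "origin_globally_stable f k \<longleftrightarrow> origin_las f k \<and>
     (\<forall>I R. sys_sol f k I R {0..} \<and> (I 0, R 0) \<in> Zreg
        \<longrightarrow> ((\<lambda>t. (I t, R t)) \<longlongrightarrow> (0, 0)) at_top)"

end

theory Submission
  imports Defs "HOL-Real_Asymp.Real_Asymp"
begin

text \<open>Near the origin the infective growth rate \<open>f R (1 - I - R) - k\<close> is close to
  \<open>f 0 - k < 0\<close>, so the quadratic form \<open>I\<^sup>2 + \<gamma> R\<^sup>2\<close> with \<open>\<gamma> = (k - f 0) / (2 (k - 1)\<^sup>2)\<close>
  decays exponentially along solutions; a first-exit argument makes its small sublevel sets
  invariant, which gives local asymptotic stability.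
  Solutions starting in the quadrant \<open>I, R \<ge> 0\<close> stay there. An equilibrium other than the
  origin would lie on the nullcline \<open>I = R / (k - 1)\<close> of \<open>R\<close>; since there is none in \<open>Z\<close>,
  compactness yields a slope \<open>\<beta>\<^sub>1 < 1 / (k - 1)\<close> above which \<open>I\<close> decays at a uniform rate,
  while below any slope \<open>\<beta>\<^sub>2 < 1 / (k - 1)\<close> the variable \<open>R\<close> decays. Weighting \<open>R\<close> by a slope
  \<open>\<beta>\<close> in between, the power sum \<open>I\<^bsup>n+1\<^esup> + (\<beta> R)\<^bsup>n+1\<^esup>\<close> with \<open>n\<close> large is a strict Lyapunov
  function on the whole quadrant, so every solution starting in \<open>Z\<close> tends to the origin.\<close>

section \<open>Differential inequalities and decay\<close>

lemma nonincreasing_if_derivative_nonpos: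
  fixes W W' :: "real \<Rightarrow> real"
  assumes "a \<le> b"
    and deriv: "\<And>s. s \<in> {a..b} \<Longrightarrow> (W has_real_derivative W' s) (at s within {a..b})"
    and nonpos: "\<And>s. a < s \<Longrightarrow> s < b \<Longrightarrow> W' s \<le> 0"
  shows "W b \<le> W a"
proof (rule DERIV_nonpos_imp_decreasing_open[OF \<open>a \<le> b\<close>])
  show "continuous_on {a..b} W"
    using deriv by (rule DERIV_continuous_on)
  fix s assume "a < s" "s < b"
  then show "\<exists>y. (W has_real_derivative y) (at s) \<and> y \<le> 0"
    using deriv[of s] nonpos[of s] by (auto simp: at_within_Icc_at)
qed

lemma exp_decay_if_derivative_le:
  fixes V V' :: "real \<Rightarrow> real"
  assumes "0 \<le> t"
    and deriv: "\<And>s. s \<in> {0..t} \<Longrightarrow> (V has_real_derivative V' s) (at s within {0..t})"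
    and decay: "\<And>s. 0 < s \<Longrightarrow> s < t \<Longrightarrow> V' s \<le> - e * V s"
  shows "V t \<le> V 0 * exp (- e * t)"
proof -
  have "V t * exp (e * t) \<le> V 0 * exp (e * 0)"
  proof (rule nonincreasing_if_derivative_nonpos[of 0 t "\<lambda>s. V s * exp (e * s)"])
    fix s assume "s \<in> {0..t}"
    then show "((\<lambda>s. V s * exp (e * s)) has_real_derivative
        (V' s + e * V s) * exp (e * s)) (at s within {0..t})"
      by (auto intro!: derivative_eq_intros deriv simp: algebra_simps)
  next
    fix s assume "0 < s" "s < t"
    then show "(V' s + e * V s) * exp (e * s) \<le> 0"
      using decay[of s] by (simp add: mult_nonpos_nonneg)
  qed (rule \<open>0 \<le> t\<close>)
  then show ?thesis
    by (simp add: exp_minus divide_inverse[symmetric] pos_le_divide_eq)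
qed

lemma stays_below_if_no_increase_before_exit:
  fixes \<phi> :: "real \<Rightarrow> real"
  assumes cont: "continuous_on {0..T} \<phi>" and start: "\<phi> 0 < L"
    and no_increase: "\<And>t. t \<in> {0..T} \<Longrightarrow> \<forall>s\<in>{0..<t}. \<phi> s < L \<Longrightarrow> \<phi> t \<le> \<phi> 0"
    and t: "t \<in> {0..T}"
  shows "\<phi> t < L"
proof (rule ccontr)
  define A where "A = {s \<in> {0..T}. L \<le> \<phi> s}"
  assume "\<not> \<phi> t < L"
  then have "A \<noteq> {}"
    using t unfolding A_def by auto
  moreover have "bdd_below A"
    unfolding A_def by (rule bdd_belowI[of _ 0]) auto
  moreover have "closed A"
    unfolding A_def by (rule continuous_on_closed_Collect_le[OF continuous_on_const cont]) simp
  ultimately have exit_time: "Inf A \<in> A"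
    by (rule closed_contains_Inf)
  have "\<phi> s < L" if "s \<in> {0..<Inf A}" for s
  proof -
    have "s \<notin> A"
      using that cInf_lower[OF _ \<open>bdd_below A\<close>, of s] by force
    moreover have "s \<in> {0..T}"
      using that exit_time unfolding A_def by auto
    ultimately show ?thesis
      unfolding A_def by auto
  qed
  then have "\<phi> (Inf A) \<le> \<phi> 0"
    using no_increase exit_time unfolding A_def by blast
  then show False
    using start exit_time unfolding A_def by auto
qed

lemma sublevel_invariant_exp_decay:
  fixes V V' :: "real \<Rightarrow> real"
  assumes deriv: "\<And>s. s \<in> {0..T} \<Longrightarrow> (V has_real_derivative V' s) (at s within {0..T})"
    and decay: "\<And>s. s \<in> {0..T} \<Longrightarrow> V s < L \<Longrightarrow> V' s \<le> - e * V s"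
    and "0 \<le> e" "0 \<le> V 0" "V 0 < L" and t: "t \<in> {0..T}"
  shows "V t < L \<and> V t \<le> V 0 * exp (- e * t)"
proof -
  have exit_decay: "V t' \<le> V 0 * exp (- e * t')"
    if t': "t' \<in> {0..T}" and below: "\<forall>s\<in>{0..<t'}. V s < L" for t'
  proof (rule exp_decay_if_derivative_le)
    show "0 \<le> t'"
      using t' by simp
    fix s assume "s \<in> {0..t'}"
    then show "(V has_real_derivative V' s) (at s within {0..t'})"
      using t' by (auto intro: has_field_derivative_subset[OF deriv])
  next
    fix s assume "0 < s" "s < t'"
    then show "V' s \<le> - e * V s"
      using t' below decay by auto
  qed
  have below: "V s < L" if "s \<in> {0..T}" for s
  proof (rule stays_below_if_no_increase_before_exit[where \<phi> = V, OF _ \<open>V 0 < L\<close> _ that])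
    show "continuous_on {0..T} V"
      using deriv by (rule DERIV_continuous_on)
    fix t' assume "t' \<in> {0..T}" "\<forall>s\<in>{0..<t'}. V s < L"
    then have "V t' \<le> V 0 * exp (- e * t')"
      by (rule exit_decay)
    also have "\<dots> \<le> V 0"
      using \<open>t' \<in> {0..T}\<close> \<open>0 \<le> e\<close> \<open>0 \<le> V 0\<close> by (intro mult_left_le) auto
    finally show "V t' \<le> V 0" .
  qed
  show ?thesis
    using below exit_decay[OF t] t by auto
qed

lemma linear_ode_solution:
  fixes x g :: "real \<Rightarrow> real"
  assumes g: "continuous_on {0..T} g"
    and deriv: "\<And>s. s \<in> {0..T} \<Longrightarrow> (x has_real_derivative x s * g s) (at s within {0..T})"
    and t: "t \<in> {0..T}"
  shows "x t = x 0 * exp (integral {0..t} g)"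
proof -
  define G where "G u = integral {0..u} g" for u
  have "((\<lambda>s. x s * exp (- G s)) has_real_derivative 0) (at s within {0..T})"
    if "s \<in> {0..T}" for s
  proof -
    have "((\<lambda>s. x s * exp (- G s)) has_real_derivative
        x s * g s * exp (- G s) + x s * (exp (- G s) * - g s)) (at s within {0..T})"
      unfolding G_def
      by (auto intro!: derivative_eq_intros deriv integral_has_real_derivative g that)
    then show ?thesis
      by (simp add: algebra_simps)
  qed
  then obtain c where "\<forall>s\<in>{0..T}. x s * exp (- G s) = c"
    using has_field_derivative_zero_constant[OF convex_real_interval(5)] by blast
  then have "x t * exp (- G t) = x 0 * exp (- G 0)"
    using t by auto
  then show ?thesis
    by (simp add: G_def exp_minus field_simps)
qed

lemma tendsto_zero_if_power_le_exp_decay: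
  fixes x :: "real \<Rightarrow> real"
  assumes "0 < p" "0 < e"
    and bound: "\<And>t. 0 \<le> t \<Longrightarrow> \<bar>x t\<bar> ^ p \<le> C * exp (- e * t)"
  shows "(x \<longlongrightarrow> 0) at_top"
proof (rule Lim_null_comparison)
  show "\<forall>\<^sub>F t in at_top. norm (x t) \<le> root p (C * exp (- e * t))"
  proof (rule eventually_mono[OF eventually_ge_at_top[of 0]])
    fix t :: real assume "0 \<le> t"
    then have "root p (\<bar>x t\<bar> ^ p) \<le> root p (C * exp (- e * t))"
      using bound \<open>0 < p\<close> by simp
    then show "norm (x t) \<le> root p (C * exp (- e * t))"
      using \<open>0 < p\<close> by (simp add: real_root_power_cancel)
  qed
  have "((\<lambda>t. C * exp (- e * t)) \<longlongrightarrow> 0) at_top"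
    using \<open>0 < e\<close> by real_asymp
  from tendsto_real_root[OF this, of p]
  show "((\<lambda>t. root p (C * exp (- e * t))) \<longlongrightarrow> 0) at_top"
    by simp
qed

lemma tendsto_origin_if_power_sum_le_exp_decay:
  fixes x y :: "real \<Rightarrow> real"
  assumes "0 < p" "0 < a" "0 < e"
    and bound: "\<And>t. 0 \<le> t \<Longrightarrow> \<bar>x t\<bar> ^ p + a * \<bar>y t\<bar> ^ p \<le> C * exp (- e * t)"
  shows "((\<lambda>t. (x t, y t)) \<longlongrightarrow> (0, 0)) at_top"
proof (rule tendsto_Pair)
  show "(x \<longlongrightarrow> 0) at_top"
  proof (rule tendsto_zero_if_power_le_exp_decay[OF \<open>0 < p\<close> \<open>0 < e\<close>])
    fix t :: real assume "0 \<le> t"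
    moreover have "0 \<le> a * \<bar>y t\<bar> ^ p"
      using \<open>0 < a\<close> by simp
    ultimately show "\<bar>x t\<bar> ^ p \<le> C * exp (- e * t)"
      using bound by fastforce
  qed
  show "(y \<longlongrightarrow> 0) at_top"
  proof (rule tendsto_zero_if_power_le_exp_decay[OF \<open>0 < p\<close> \<open>0 < e\<close>])
    fix t :: real assume "0 \<le> t"
    moreover have "0 \<le> \<bar>x t\<bar> ^ p"
      by simp
    ultimately have "a * \<bar>y t\<bar> ^ p \<le> C * exp (- e * t)"
      using bound[of t] by linarith
    then show "\<bar>y t\<bar> ^ p \<le> C / a * exp (- e * t)"
      using \<open>0 < a\<close> by (simp add: field_simps)
  qed
qed

lemma bounded_above_on_Icc:
  fixes g :: "real \<Rightarrow> real"
  assumes "continuous_on {a..b} g"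
  obtains B where "0 < B" "\<And>x. x \<in> {a..b} \<Longrightarrow> g x \<le> B"
proof -
  have "bounded (g ` {a..b})"
    using assms by (intro compact_imp_bounded compact_continuous_image) auto
  then obtain B where "0 < B" "\<forall>y\<in>g ` {a..b}. norm y \<le> B"
    by (auto simp: bounded_pos)
  then show thesis
    using that by (auto simp: abs_le_iff)
qed

lemma cross_term_le_squares:
  fixes a c x y :: real
  assumes "0 \<le> a" "c \<noteq> 0"
  shows "a / c * x * y \<le> a / 2 * x ^ 2 + a / (2 * c ^ 2) * y ^ 2"
proof -
  have "a / 2 * x ^ 2 + a / (2 * c ^ 2) * y ^ 2 - a / c * x * y = a / 2 * (x - y / c) ^ 2"
    using \<open>c \<noteq> 0\<close> by (simp add: field_simps power2_eq_square)
  moreover have "0 \<le> a / 2 * (x - y / c) ^ 2"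
    using \<open>0 \<le> a\<close> by simp
  ultimately show ?thesis
    by linarith
qed

lemma quadratic_form_sublevel_in_ball:
  fixes x y \<gamma> \<rho> :: real
  assumes "0 < \<gamma>" "0 < \<rho>" and sublevel: "x ^ 2 + \<gamma> * y ^ 2 < min 1 \<gamma> * \<rho> ^ 2"
  shows "norm (x, y) < \<rho>"
proof -
  have "min 1 \<gamma> * (x ^ 2 + y ^ 2) \<le> x ^ 2 + \<gamma> * y ^ 2"
    unfolding distrib_left using \<open>0 < \<gamma>\<close>
    by (intro add_mono mult_right_mono mult_left_le_one_le) auto
  then have "min 1 \<gamma> * (norm (x, y)) ^ 2 < min 1 \<gamma> * \<rho> ^ 2"
    using sublevel by (simp add: norm_Pair)
  then have "(norm (x, y)) ^ 2 < \<rho> ^ 2"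
    using \<open>0 < \<gamma>\<close> by (simp add: mult_less_cancel_left_pos)
  then show ?thesis
    using \<open>0 < \<rho>\<close> by (simp add: power_less_imp_less_base)
qed

lemma power_sum_estimate_dominant:
  fixes u v U V c D \<rho> :: real
  assumes "0 \<le> u" "0 \<le> v" "v \<le> \<rho> * u" "\<rho> \<le> 1" "0 \<le> D" "0 \<le> c"
    and U: "U \<le> - c * u" and V: "V \<le> D * u" and small: "D * \<rho> ^ n \<le> c / 2"
  shows "u ^ n * U + v ^ n * V \<le> - (c / 4) * (u ^ Suc n + v ^ Suc n)"
proof -
  have "u ^ n * U \<le> u ^ n * (- c * u)"
    using U \<open>0 \<le> u\<close> by (intro mult_left_mono) auto
  then have dominant: "u ^ n * U \<le> - c * u ^ Suc n"
    by (simp add: algebra_simps)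
  have "v ^ n * V \<le> v ^ n * (D * u)"
    using V \<open>0 \<le> v\<close> by (intro mult_left_mono) auto
  also have "\<dots> \<le> (\<rho> * u) ^ n * (D * u)"
    using \<open>0 \<le> u\<close> \<open>0 \<le> v\<close> \<open>v \<le> \<rho> * u\<close> \<open>0 \<le> D\<close> by (intro mult_right_mono power_mono) auto
  also have "\<dots> = (D * \<rho> ^ n) * u ^ Suc n"
    by (simp add: power_mult_distrib algebra_simps)
  also have "\<dots> \<le> c / 2 * u ^ Suc n"
    using small \<open>0 \<le> u\<close> by (intro mult_right_mono) auto
  finally have minor: "v ^ n * V \<le> c / 2 * u ^ Suc n" .
  have "v \<le> u"
    using \<open>v \<le> \<rho> * u\<close> \<open>\<rho> \<le> 1\<close> \<open>0 \<le> u\<close> mult_right_mono[of \<rho> 1 u] by linarith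
  then have "c / 4 * (u ^ Suc n + v ^ Suc n) \<le> c / 4 * (u ^ Suc n + u ^ Suc n)"
    using \<open>0 \<le> v\<close> \<open>0 \<le> c\<close> by (intro mult_left_mono add_left_mono power_mono) auto
  with dominant minor show ?thesis
    by simp
qed

text \<open>In each of the regions \<open>q\<^sub>2 y \<le> x\<close>, \<open>x \<le> q\<^sub>1 y\<close> and \<open>q\<^sub>1 y < x < q\<^sub>2 y\<close> the larger
  of \<open>x\<close>, \<open>y\<close> decays, and for large \<open>n\<close> this outweighs any growth of the other.\<close>
lemma power_sum_sector_estimate:
  fixes x y X Y c \<delta> F B q\<^sub>1 q\<^sub>2 :: real
  assumes "0 \<le> x" "0 \<le> y" "0 < c" "0 < \<delta>" "0 \<le> F" "0 \<le> B" "0 < q\<^sub>1" "q\<^sub>1 < 1" "1 < q\<^sub>2"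
    and X_decay: "q\<^sub>1 * y \<le> x \<Longrightarrow> X \<le> - c * x"
    and Y_decay: "x \<le> q\<^sub>2 * y \<Longrightarrow> Y \<le> - \<delta> * y"
    and X_le: "X \<le> F * x" and Y_le: "Y \<le> B * x"
    and B_small: "B * (1 / q\<^sub>2) ^ n \<le> c / 2" and F_small: "F * q\<^sub>1 ^ n \<le> \<delta> / 2"
  shows "x ^ n * X + y ^ n * Y \<le> - (min c \<delta> / 4) * (x ^ Suc n + y ^ Suc n)"
proof -
  have sum_nonneg: "0 \<le> x ^ Suc n + y ^ Suc n"
    using \<open>0 \<le> x\<close> \<open>0 \<le> y\<close> by simp
  have "q\<^sub>1 * y \<le> y" "y \<le> q\<^sub>2 * y"
    using \<open>0 \<le> y\<close> \<open>q\<^sub>1 < 1\<close> \<open>1 < q\<^sub>2\<close> mult_right_mono[of q\<^sub>1 1 y] mult_right_mono[of 1 q\<^sub>2 y]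
    by auto
  consider "q\<^sub>2 * y \<le> x" | "x \<le> q\<^sub>1 * y" | "q\<^sub>1 * y < x" "x < q\<^sub>2 * y"
    by linarith
  then show ?thesis
  proof cases
    case 1
    then have "y \<le> 1 / q\<^sub>2 * x"
      using \<open>1 < q\<^sub>2\<close> by (simp add: field_simps)
    then have "x ^ n * X + y ^ n * Y \<le> - (c / 4) * (x ^ Suc n + y ^ Suc n)"
      using 1 \<open>q\<^sub>1 * y \<le> y\<close> \<open>y \<le> q\<^sub>2 * y\<close> assms(1,2,3,6,9) X_decay Y_le B_small
      by (intro power_sum_estimate_dominant) auto
    also have "\<dots> \<le> - (min c \<delta> / 4) * (x ^ Suc n + y ^ Suc n)"
      using sum_nonneg by (intro mult_right_mono) auto
    finally show ?thesis .
  next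
    case 2
    have "X \<le> F * y"
      using X_le 2 \<open>q\<^sub>1 * y \<le> y\<close> \<open>0 \<le> F\<close> mult_left_mono[of x y F] by linarith
    then have "y ^ n * Y + x ^ n * X \<le> - (\<delta> / 4) * (y ^ Suc n + x ^ Suc n)"
      using 2 \<open>q\<^sub>1 * y \<le> y\<close> \<open>y \<le> q\<^sub>2 * y\<close> assms(1,2,4,5,7,8) Y_decay F_small
      by (intro power_sum_estimate_dominant) (auto simp: mult.commute)
    also have "\<dots> \<le> - (min c \<delta> / 4) * (y ^ Suc n + x ^ Suc n)"
      using sum_nonneg by (intro mult_right_mono) auto
    finally show ?thesis
      by (simp add: algebra_simps)
  next
    case 3
    have "x ^ n * X \<le> x ^ n * (- c * x)" "y ^ n * Y \<le> y ^ n * (- \<delta> * y)"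
      using 3 X_decay Y_decay \<open>0 \<le> x\<close> \<open>0 \<le> y\<close> by (intro mult_left_mono; simp)+
    moreover have "min c \<delta> / 4 * x ^ Suc n \<le> c * x ^ Suc n"
      "min c \<delta> / 4 * y ^ Suc n \<le> \<delta> * y ^ Suc n"
      using \<open>0 \<le> x\<close> \<open>0 \<le> y\<close> \<open>0 < c\<close> \<open>0 < \<delta>\<close> by (intro mult_right_mono; simp)+
    ultimately show ?thesis
      by (simp add: algebra_simps)
  qed
qed

lemma power_sum_sector_Lyapunov:
  fixes c \<delta> F B q\<^sub>1 q\<^sub>2 :: real
  assumes "0 < c" "0 < \<delta>" "0 \<le> F" "0 \<le> B" "0 < q\<^sub>1" "q\<^sub>1 < 1" "1 < q\<^sub>2"
  obtains n where "\<And>x y X Y. 0 \<le> x \<Longrightarrow> 0 \<le> y \<Longrightarrow>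
      (q\<^sub>1 * y \<le> x \<Longrightarrow> X \<le> - c * x) \<Longrightarrow> (x \<le> q\<^sub>2 * y \<Longrightarrow> Y \<le> - \<delta> * y) \<Longrightarrow>
      X \<le> F * x \<Longrightarrow> Y \<le> B * x \<Longrightarrow>
      x ^ n * X + y ^ n * Y \<le> - (min c \<delta> / 4) * (x ^ Suc n + y ^ Suc n)"
proof -
  have "(\<lambda>n. B * (1 / q\<^sub>2) ^ n) \<longlonglongrightarrow> 0" "(\<lambda>n. F * q\<^sub>1 ^ n) \<longlonglongrightarrow> 0"
    using \<open>0 < q\<^sub>1\<close> \<open>q\<^sub>1 < 1\<close> \<open>1 < q\<^sub>2\<close>
    by (auto intro!: tendsto_mult_right_zero LIMSEQ_power_zero)
  then have "\<forall>\<^sub>F n in sequentially. B * (1 / q\<^sub>2) ^ n < c / 2 \<and> F * q\<^sub>1 ^ n < \<delta> / 2"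
    using \<open>0 < c\<close> \<open>0 < \<delta>\<close> by (intro eventually_conj order_tendstoD(2)) auto
  then obtain n where "B * (1 / q\<^sub>2) ^ n \<le> c / 2" "F * q\<^sub>1 ^ n \<le> \<delta> / 2"
    unfolding eventually_sequentially by (auto intro: less_imp_le)
  with assms show thesis
    by (intro that power_sum_sector_estimate) auto
qed

lemma weighted_power_sum_sector_Lyapunov:
  fixes c \<delta> F B \<beta>\<^sub>1 \<beta>\<^sub>2 :: real
  assumes "0 < c" "0 < \<delta>" "0 \<le> F" "0 \<le> B" "0 < \<beta>\<^sub>1" "\<beta>\<^sub>1 < \<beta>\<^sub>2"
  obtains \<beta> n where "0 < \<beta>" "\<And>x y X Y. 0 \<le> x \<Longrightarrow> 0 \<le> y \<Longrightarrow>
      (\<beta>\<^sub>1 * y \<le> x \<Longrightarrow> X \<le> - c * x) \<Longrightarrow> (x \<le> \<beta>\<^sub>2 * y \<Longrightarrow> Y \<le> - \<delta> * y) \<Longrightarrow>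
      X \<le> F * x \<Longrightarrow> Y \<le> B * x \<Longrightarrow>
      x ^ n * X + (\<beta> * y) ^ n * (\<beta> * Y) \<le> - (min c \<delta> / 4) * (x ^ Suc n + (\<beta> * y) ^ Suc n)"
proof -
  define \<beta> where "\<beta> = (\<beta>\<^sub>1 + \<beta>\<^sub>2) / 2"
  have "0 < \<beta>" and q: "0 < \<beta>\<^sub>1 / \<beta>" "\<beta>\<^sub>1 / \<beta> < 1" "1 < \<beta>\<^sub>2 / \<beta>"
    using \<open>0 < \<beta>\<^sub>1\<close> \<open>\<beta>\<^sub>1 < \<beta>\<^sub>2\<close> unfolding \<beta>_def by (auto simp: field_simps)
  have "0 \<le> \<beta> * B"
    using \<open>0 < \<beta>\<close> \<open>0 \<le> B\<close> by simp
  obtain n where Lyapunov: "\<And>x y X Y. 0 \<le> x \<Longrightarrow> 0 \<le> y \<Longrightarrow>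
      (\<beta>\<^sub>1 / \<beta> * y \<le> x \<Longrightarrow> X \<le> - c * x) \<Longrightarrow> (x \<le> \<beta>\<^sub>2 / \<beta> * y \<Longrightarrow> Y \<le> - \<delta> * y) \<Longrightarrow>
      X \<le> F * x \<Longrightarrow> Y \<le> (\<beta> * B) * x \<Longrightarrow>
      x ^ n * X + y ^ n * Y \<le> - (min c \<delta> / 4) * (x ^ Suc n + y ^ Suc n)"
    using power_sum_sector_Lyapunov[OF \<open>0 < c\<close> \<open>0 < \<delta>\<close> \<open>0 \<le> F\<close> \<open>0 \<le> \<beta> * B\<close> q] by blast
  show thesis
  proof (rule that[OF \<open>0 < \<beta>\<close>])
    fix x y X Y
    assume "0 \<le> x" "0 \<le> y" and X_decay: "\<beta>\<^sub>1 * y \<le> x \<Longrightarrow> X \<le> - c * x"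
      and Y_decay: "x \<le> \<beta>\<^sub>2 * y \<Longrightarrow> Y \<le> - \<delta> * y" and "X \<le> F * x" "Y \<le> B * x"
    show "x ^ n * X + (\<beta> * y) ^ n * (\<beta> * Y) \<le> - (min c \<delta> / 4) * (x ^ Suc n + (\<beta> * y) ^ Suc n)"
    proof (rule Lyapunov)
      show "0 \<le> \<beta> * y"
        using \<open>0 < \<beta>\<close> \<open>0 \<le> y\<close> by simp
      show "X \<le> - c * x" if "\<beta>\<^sub>1 / \<beta> * (\<beta> * y) \<le> x"
        using X_decay that \<open>0 < \<beta>\<close> by simp
      show "\<beta> * Y \<le> - \<delta> * (\<beta> * y)" if "x \<le> \<beta>\<^sub>2 / \<beta> * (\<beta> * y)"
        using Y_decay that \<open>0 < \<beta>\<close> mult_left_mono[of Y "- \<delta> * y" \<beta>] by (simp add: algebra_simps)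
      show "\<beta> * Y \<le> \<beta> * B * x"
        using \<open>Y \<le> B * x\<close> \<open>0 < \<beta>\<close> mult_left_mono[of Y "B * x" \<beta>] by (simp add: algebra_simps)
    qed fact+
  qed
qed

section \<open>Local asymptotic stability\<close>

lemma sys_sol_subset:
  assumes "sys_sol f k I R S" and "S' \<subseteq> S"
  shows "sys_sol f k I R S'"
  using assms unfolding sys_sol_def by (auto intro: has_field_derivative_subset)

lemma rate_below_near_origin:
  fixes f :: "real \<Rightarrow> real"
  assumes "isCont f 0" "f 0 < k"
  obtains r where "0 < r"
    "\<And>I R. \<bar>I\<bar> \<le> r \<Longrightarrow> \<bar>R\<bar> \<le> r \<Longrightarrow> f R * (1 - I - R) - k \<le> - (k - f 0) / 2"
proof -
  define a where "a = k - f 0"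
  have "0 < a"
    using \<open>f 0 < k\<close> unfolding a_def by simp
  have "isCont (\<lambda>z. f (snd z)) (0, 0)"
    using isCont_o2[where f = snd and a = "(0, 0)" and g = f] \<open>isCont f 0\<close>
    by (simp add: continuous_intros)
  then have "isCont (\<lambda>z. f (snd z) * (1 - fst z - snd z) - k) (0, 0)"
    by (intro continuous_intros)
  from this[unfolded continuous_at_eps_delta, rule_format, of "a / 2"]
  obtain d where "0 < d"
    and near: "\<And>z. dist z (0, 0) < d \<Longrightarrow>
      dist (f (snd z) * (1 - fst z - snd z) - k) (f 0 - k) < a / 2"
    using \<open>0 < a\<close> by auto
  have "f R * (1 - I - R) - k \<le> - a / 2" if "\<bar>I\<bar> \<le> d / 3" "\<bar>R\<bar> \<le> d / 3" for I R
  proof -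
    have "dist (I, R) (0, 0) \<le> \<bar>I\<bar> + \<bar>R\<bar>"
      using norm_Pair_le[of I R] by (simp add: dist_norm)
    also have "\<dots> < d"
      using that \<open>0 < d\<close> by simp
    finally have "\<bar>(f R * (1 - I - R) - k) - (f 0 - k)\<bar> < a / 2"
      using near[of "(I, R)"] by (simp add: dist_real_def)
    then show ?thesis
      unfolding a_def abs_less_iff by (auto simp: field_simps)
  qed
  moreover have "0 < d / 3"
    using \<open>0 < d\<close> by simp
  ultimately show thesis
    using that unfolding a_def by blast
qed

lemma local_quadratic_Lyapunov:
  fixes f :: "real \<Rightarrow> real"
  assumes "k > 1" "f 0 < k" "isCont f 0"
  obtains r \<gamma> e :: real where "0 < r" "0 < \<gamma>" "0 < e"
    "\<And>I R. \<bar>I\<bar> \<le> r \<Longrightarrow> \<bar>R\<bar> \<le> r \<Longrightarrow>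
       2 * I * (I * (f R * (1 - I - R) - k)) + \<gamma> * (2 * R * ((k - 1) * I - R))
         \<le> - e * (I ^ 2 + \<gamma> * R ^ 2)"
proof -
  define a where "a = k - f 0"
  have "0 < a"
    using assms(2) unfolding a_def by simp
  obtain r where "0 < r"
    and rate: "\<And>I R. \<bar>I\<bar> \<le> r \<Longrightarrow> \<bar>R\<bar> \<le> r \<Longrightarrow> f R * (1 - I - R) - k \<le> - a / 2"
    using rate_below_near_origin[OF assms(3,2)] unfolding a_def by blast
  define \<gamma> where "\<gamma> = a / (2 * (k - 1) ^ 2)"
  define e where "e = min (a / 2) 1"
  have "0 < \<gamma>" "0 < e"
    using \<open>0 < a\<close> \<open>k > 1\<close> unfolding \<gamma>_def e_def by auto
  have "2 * I * (I * (f R * (1 - I - R) - k)) + \<gamma> * (2 * R * ((k - 1) * I - R))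
      \<le> - e * (I ^ 2 + \<gamma> * R ^ 2)" if "\<bar>I\<bar> \<le> r" "\<bar>R\<bar> \<le> r" for I R
  proof -
    have "2 * I * (I * (f R * (1 - I - R) - k)) = 2 * I ^ 2 * (f R * (1 - I - R) - k)"
      by (simp add: power2_eq_square)
    also have "\<dots> \<le> 2 * I ^ 2 * (- a / 2)"
      using rate[OF that] by (intro mult_left_mono) auto
    finally have infective: "2 * I * (I * (f R * (1 - I - R) - k)) \<le> - a * I ^ 2"
      by (simp add: mult.commute)
    have "2 * \<gamma> * (k - 1) * I * R = a / (k - 1) * I * R"
      using \<open>k > 1\<close> unfolding \<gamma>_def by (simp add: power2_eq_square)
    moreover have "a / (k - 1) * I * R \<le> a / 2 * I ^ 2 + \<gamma> * R ^ 2"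
      unfolding \<gamma>_def using \<open>0 < a\<close> \<open>k > 1\<close> by (intro cross_term_le_squares) auto
    ultimately have cross: "2 * \<gamma> * (k - 1) * I * R \<le> a / 2 * I ^ 2 + \<gamma> * R ^ 2"
      by linarith
    have "e * I ^ 2 \<le> a / 2 * I ^ 2" "e * (\<gamma> * R ^ 2) \<le> 1 * (\<gamma> * R ^ 2)"
      using \<open>0 < \<gamma>\<close> unfolding e_def by (intro mult_right_mono; simp)+
    with infective cross show ?thesis
      by (simp add: algebra_simps power2_eq_square)
  qed
  then show thesis
    using that \<open>0 < r\<close> \<open>0 < \<gamma>\<close> \<open>0 < e\<close> by blast
qed

lemma sys_sol_local_decay:
  fixes I R :: "real \<Rightarrow> real"
  assumes est: "\<And>I R. \<bar>I\<bar> \<le> r \<Longrightarrow> \<bar>R\<bar> \<le> r \<Longrightarrow>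
       2 * I * (I * (f R * (1 - I - R) - k)) + \<gamma> * (2 * R * ((k - 1) * I - R))
         \<le> - e * (I ^ 2 + \<gamma> * R ^ 2)"
    and "0 < \<gamma>" "0 < e" "0 < \<rho>" "\<rho> \<le> r"
    and sol: "sys_sol f k I R {0..T}"
    and start: "norm (I 0, R 0) < sqrt (min 1 \<gamma> * \<rho> ^ 2 / (1 + \<gamma>))"
    and t: "t \<in> {0..T}"
  shows "norm (I t, R t) < \<rho> \<and> I t ^ 2 + \<gamma> * R t ^ 2 \<le> (I 0 ^ 2 + \<gamma> * R 0 ^ 2) * exp (- e * t)"
proof -
  define V where "V s = I s ^ 2 + \<gamma> * R s ^ 2" for s
  define L where "L = min 1 \<gamma> * \<rho> ^ 2"
  have small: "norm (I s, R s) < \<rho>" if "V s < L" for s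
    using quadratic_form_sublevel_in_ball[OF \<open>0 < \<gamma>\<close> \<open>0 < \<rho>\<close>] that unfolding V_def L_def .
  have "I 0 ^ 2 + R 0 ^ 2 < min 1 \<gamma> * \<rho> ^ 2 / (1 + \<gamma>)"
    using start by (simp add: norm_Pair)
  then have "(1 + \<gamma>) * (I 0 ^ 2 + R 0 ^ 2) < L"
    using \<open>0 < \<gamma>\<close> unfolding L_def by (simp add: field_simps)
  moreover have "V 0 \<le> (1 + \<gamma>) * (I 0 ^ 2 + R 0 ^ 2)"
    unfolding V_def using \<open>0 < \<gamma>\<close> by (simp add: algebra_simps)
  ultimately have "V 0 < L"
    by linarith
  have "V t < L \<and> V t \<le> V 0 * exp (- e * t)"
  proof (rule sublevel_invariant_exp_decay[where V = V, OF _ _ _ _ \<open>V 0 < L\<close> t])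
    fix s assume "s \<in> {0..T}"
    then have "(I has_real_derivative I s * (f (R s) * (1 - I s - R s) - k)) (at s within {0..T})"
      and "(R has_real_derivative (k - 1) * I s - R s) (at s within {0..T})"
      using sol unfolding sys_sol_def by auto
    then show "(V has_real_derivative 2 * I s * (I s * (f (R s) * (1 - I s - R s) - k))
        + \<gamma> * (2 * R s * ((k - 1) * I s - R s))) (at s within {0..T})"
      unfolding V_def by (auto intro!: derivative_eq_intros simp: algebra_simps)
  next
    fix s assume "V s < L"
    then have "norm (I s, R s) < \<rho>"
      by (rule small)
    then have "\<bar>I s\<bar> \<le> r" "\<bar>R s\<bar> \<le> r"
      using norm_fst_le[of "I s" "R s"] norm_snd_le[of "R s" "I s"] \<open>\<rho> \<le> r\<close> by auto
    then show "2 * I s * (I s * (f (R s) * (1 - I s - R s) - k))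
        + \<gamma> * (2 * R s * ((k - 1) * I s - R s)) \<le> - e * V s"
      unfolding V_def by (rule est)
  qed (use \<open>0 < e\<close> \<open>0 < \<gamma>\<close> in \<open>simp_all add: V_def\<close>)
  then show ?thesis
    using small unfolding V_def by blast
qed

lemma origin_las_if_f0_less_k:
  fixes f :: "real \<Rightarrow> real"
  assumes "k > 1" "f 0 < k" "isCont f 0"
  shows "origin_las f k"
proof -
  obtain r \<gamma> e where "0 < r" "0 < \<gamma>" "0 < e" and est:
    "\<And>I R. \<bar>I\<bar> \<le> r \<Longrightarrow> \<bar>R\<bar> \<le> r \<Longrightarrow>
       2 * I * (I * (f R * (1 - I - R) - k)) + \<gamma> * (2 * R * ((k - 1) * I - R))
         \<le> - e * (I ^ 2 + \<gamma> * R ^ 2)"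
    using local_quadratic_Lyapunov[OF assms] by blast
  define \<delta> where "\<delta> \<rho> = sqrt (min 1 \<gamma> * \<rho> ^ 2 / (1 + \<gamma>))" for \<rho>
  have \<delta>_pos: "0 < \<delta> \<rho>" if "0 < \<rho>" for \<rho>
    using \<open>0 < \<gamma>\<close> that unfolding \<delta>_def by simp
  have trap: "norm (I t, R t) < \<rho> \<and> I t ^ 2 + \<gamma> * R t ^ 2 \<le> (I 0 ^ 2 + \<gamma> * R 0 ^ 2) * exp (- e * t)"
    if "0 < \<rho>" "\<rho> \<le> r" "sys_sol f k I R {0..T}" "norm (I 0, R 0) < \<delta> \<rho>" "t \<in> {0..T}"
    for \<rho> I R T t
    by (rule sys_sol_local_decay[OF _ \<open>0 < \<gamma>\<close> \<open>0 < e\<close> that[unfolded \<delta>_def]]) (rule est)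
  have "origin_stable f k"
    unfolding origin_stable_def
  proof (intro allI impI)
    fix \<epsilon> :: real assume "0 < \<epsilon>"
    then have "0 < min \<epsilon> r"
      using \<open>0 < r\<close> by simp
    have "norm (I t, R t) < \<epsilon>"
      if "sys_sol f k I R {0..T}" "norm (I 0, R 0) < \<delta> (min \<epsilon> r)" "t \<in> {0..T}" for I R T t
      using trap[OF \<open>0 < min \<epsilon> r\<close> min.cobounded2 that] by simp
    then show "\<exists>\<delta>>0. \<forall>I R T. sys_sol f k I R {0..T} \<and> norm (I 0, R 0) < \<delta>
        \<longrightarrow> (\<forall>t\<in>{0..T}. norm (I t, R t) < \<epsilon>)"
      using \<delta>_pos[OF \<open>0 < min \<epsilon> r\<close>] by blast
  qed
  moreover have "origin_attractive f k"
    unfolding origin_attractive_def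
  proof (intro exI[of _ "\<delta> r"] conjI allI impI)
    show "0 < \<delta> r"
      using \<open>0 < r\<close> by (rule \<delta>_pos)
    fix I R :: "real \<Rightarrow> real"
    assume "sys_sol f k I R {0..} \<and> norm (I 0, R 0) < \<delta> r"
    then have "I t ^ 2 + \<gamma> * R t ^ 2 \<le> (I 0 ^ 2 + \<gamma> * R 0 ^ 2) * exp (- e * t)" if "0 \<le> t" for t
      using trap[OF \<open>0 < r\<close> order_refl sys_sol_subset[of f k I R "{0..}" "{0..t}"]] that by auto
    then show "((\<lambda>t. (I t, R t)) \<longlongrightarrow> (0, 0)) at_top"
      using \<open>0 < \<gamma>\<close> \<open>0 < e\<close>
      by (intro tendsto_origin_if_power_sum_le_exp_decay[of 2 \<gamma> e _ _ "I 0 ^ 2 + \<gamma> * R 0 ^ 2"])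
        (auto simp: mult.commute)
  qed
  ultimately show ?thesis
    unfolding origin_las_def ..
qed

section \<open>Global convergence in the quadrant\<close>

lemma sys_sol_nonneg:
  assumes sol: "sys_sol f k I R {0..T}" and f: "continuous_on UNIV f" and "k > 1"
    and "0 \<le> I 0" "0 \<le> R 0" and t: "t \<in> {0..T}"
  shows "0 \<le> I t \<and> 0 \<le> R t"
proof -
  have dI: "(I has_real_derivative I s * (f (R s) * (1 - I s - R s) - k)) (at s within {0..T})"
    and dR: "(R has_real_derivative (k - 1) * I s - R s) (at s within {0..T})"
    if "s \<in> {0..T}" for s
    using sol that unfolding sys_sol_def by auto
  have I_cont: "continuous_on {0..T} I" and R_cont: "continuous_on {0..T} R"
    using DERIV_continuous_on[OF dI] DERIV_continuous_on[OF dR] by auto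
  have rate_cont: "continuous_on {0..T} (\<lambda>s. f (R s) * (1 - I s - R s) - k)"
    using continuous_on_compose2[OF f R_cont]
    by (intro continuous_intros I_cont R_cont) auto
  have I_nonneg: "0 \<le> I s" if "s \<in> {0..T}" for s
    using linear_ode_solution[OF rate_cont dI that] \<open>0 \<le> I 0\<close> by simp
  text \<open>The factor \<open>exp s\<close> absorbs the loss term: \<open>(R e\<^sup>s)' = (k - 1) I e\<^sup>s \<ge> 0\<close>.\<close>
  have "- (R t * exp t) \<le> - (R 0 * exp 0)"
  proof (rule nonincreasing_if_derivative_nonpos[of 0 t "\<lambda>s. - (R s * exp s)"])
    fix s assume "s \<in> {0..t}"
    then have "(R has_real_derivative (k - 1) * I s - R s) (at s within {0..t})"
      using t by (auto intro: has_field_derivative_subset[OF dR])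
    then show "((\<lambda>s. - (R s * exp s)) has_real_derivative - ((k - 1) * I s * exp s))
        (at s within {0..t})"
      by (auto intro!: derivative_eq_intros simp: algebra_simps)
  next
    fix s assume "0 < s" "s < t"
    then show "- ((k - 1) * I s * exp s) \<le> 0"
      using I_nonneg[of s] t \<open>k > 1\<close> by simp
  qed (use t in simp)
  then have "0 \<le> R t * exp t"
    using \<open>0 \<le> R 0\<close> by simp
  then show ?thesis
    using I_nonneg[OF t] by (simp add: zero_le_mult_iff)
qed

text \<open>At the point \<open>(R / (k - 1), R)\<close> of the nullcline of \<open>R\<close> the growth rate of \<open>I\<close> is
  \<open>f R (1 - k R / (k - 1)) - k\<close>.\<close>
lemma equilibrium_on_nullcline:
  fixes f :: "real \<Rightarrow> real"
  assumes "k > 1" "0 \<le> R" "k * R \<le> k - 1" and rate: "f R * (1 - k * R / (k - 1)) = k"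
  shows "(R / (k - 1), R) \<in> Zreg" "is_equilibrium f k (R / (k - 1), R)"
proof -
  have "R \<le> k * R"
    using mult_right_mono[of 1 k R] \<open>0 \<le> R\<close> \<open>k > 1\<close> by simp
  moreover have "R \<le> 1"
    using \<open>k * R \<le> k - 1\<close> \<open>k > 1\<close> by (smt (verit) mult_le_cancel_left1)
  ultimately have "R / (k - 1) + R \<le> 1" "R / (k - 1) \<le> 1"
    using \<open>k * R \<le> k - 1\<close> \<open>k > 1\<close> by (simp_all add: field_simps)
  then show "(R / (k - 1), R) \<in> Zreg"
    using \<open>0 \<le> R\<close> \<open>R \<le> 1\<close> \<open>k > 1\<close> unfolding Zreg_def by simp
  have on_nullcline: "1 - R / (k - 1) - R = 1 - k * R / (k - 1)"
    using \<open>k > 1\<close> by (simp add: field_simps)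
  show "is_equilibrium f k (R / (k - 1), R)"
    using rate \<open>k > 1\<close> unfolding is_equilibrium_def prod.sel on_nullcline by simp
qed

lemma nullcline_rate_below_k:
  fixes f :: "real \<Rightarrow> real"
  assumes "k > 1" "f 0 < k" "continuous_on UNIV f" "\<forall>x. 0 < f x"
    and no_eq: "\<forall>p\<in>Zreg. is_equilibrium f k p \<longrightarrow> p = (0, 0)"
    and "0 \<le> R"
  shows "f R * (1 - k * R / (k - 1)) < k"
proof (cases "R \<le> (k - 1) / k")
  case False
  then have "1 - k * R / (k - 1) < 0"
    using \<open>k > 1\<close> by (simp add: field_simps)
  moreover have "0 < f R"
    using \<open>\<forall>x. 0 < f x\<close> by simp
  ultimately have "f R * (1 - k * R / (k - 1)) < 0"
    by (simp add: mult_pos_neg)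
  then show ?thesis
    using \<open>k > 1\<close> by linarith
next
  case True
  define h where "h x = f x * (1 - k * x / (k - 1)) - k" for x
  show ?thesis
  proof (rule ccontr)
    assume "\<not> ?thesis"
    then have "h 0 \<le> 0" "0 \<le> h R"
      using \<open>f 0 < k\<close> unfolding h_def by auto
    moreover have "continuous_on {0..R} h"
      unfolding h_def using \<open>k > 1\<close>
      by (intro continuous_intros continuous_on_subset[OF \<open>continuous_on UNIV f\<close>]) auto
    ultimately obtain R\<^sub>1 where "0 \<le> R\<^sub>1" "R\<^sub>1 \<le> R" "h R\<^sub>1 = 0"
      using IVT'[of h 0 0 R] \<open>0 \<le> R\<close> by auto
    then have "R\<^sub>1 \<noteq> 0"
      using \<open>f 0 < k\<close> unfolding h_def by auto
    have "k * R\<^sub>1 \<le> k * R"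
      using \<open>R\<^sub>1 \<le> R\<close> \<open>k > 1\<close> by simp
    also have "\<dots> \<le> k - 1"
      using True \<open>k > 1\<close> by (simp add: field_simps)
    finally have "k * R\<^sub>1 \<le> k - 1" .
    with \<open>k > 1\<close> \<open>0 \<le> R\<^sub>1\<close> \<open>h R\<^sub>1 = 0\<close> have "(R\<^sub>1 / (k - 1), R\<^sub>1) = (0, 0)"
      using no_eq equilibrium_on_nullcline[of k R\<^sub>1 f] unfolding h_def by simp
    then show False
      using \<open>R\<^sub>1 \<noteq> 0\<close> by simp
  qed
qed

lemma nullcline_rate_gap:
  fixes f :: "real \<Rightarrow> real"
  assumes "k > 1" "f 0 < k" "continuous_on UNIV f" "\<forall>x. 0 < f x"
    and "\<forall>p\<in>Zreg. is_equilibrium f k p \<longrightarrow> p = (0, 0)"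
  obtains m where "0 < m" "m \<le> k" "\<And>R. R \<in> {0..1} \<Longrightarrow> f R * (1 - k * R / (k - 1)) \<le> k - m"
proof -
  have cont: "continuous_on {0..1} (\<lambda>R. f R * (1 - k * R / (k - 1)))"
    using \<open>k > 1\<close> by (intro continuous_intros continuous_on_subset[OF \<open>continuous_on UNIV f\<close>]) auto
  obtain R\<^sub>0 where "R\<^sub>0 \<in> {0..1}"
    and R\<^sub>0_max: "\<forall>R\<in>{0..1}. f R * (1 - k * R / (k - 1)) \<le> f R\<^sub>0 * (1 - k * R\<^sub>0 / (k - 1))"
    using continuous_attains_sup[OF compact_Icc _ cont] by auto
  define m where "m = k - f R\<^sub>0 * (1 - k * R\<^sub>0 / (k - 1))"
  have "0 < m"
    using nullcline_rate_below_k[OF assms, of R\<^sub>0] \<open>R\<^sub>0 \<in> {0..1}\<close> unfolding m_def by simp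
  moreover have gap: "f R * (1 - k * R / (k - 1)) \<le> k - m" if "R \<in> {0..1}" for R
    using R\<^sub>0_max that unfolding m_def by simp
  moreover have "m \<le> k"
    using gap[of 0] spec[OF \<open>\<forall>x. 0 < f x\<close>, of 0] by simp
  ultimately show thesis
    using that by blast
qed

lemma infective_rate_bound_in_sector:
  fixes f :: "real \<Rightarrow> real"
  assumes "k > 1" "\<forall>x. 0 < f x" "m \<le> k" "0 < d" "d < 1 / (k - 1)" "F * d \<le> m / 2"
    and nullcline: "\<And>R. R \<in> {0..1} \<Longrightarrow> f R * (1 - k * R / (k - 1)) \<le> k - m"
    and F: "\<And>R. R \<in> {0..1} \<Longrightarrow> f R \<le> F"
    and "0 \<le> I" "0 \<le> R" and sector: "(1 / (k - 1) - d) * R \<le> I"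
  shows "f R * (1 - I - R) - k \<le> - (m / 2)"
proof -
  define \<beta> where "\<beta> = 1 / (k - 1) - d"
  have "0 < \<beta>"
    using \<open>d < 1 / (k - 1)\<close> unfolding \<beta>_def by simp
  have "f R * (1 - I - R) \<le> f R * (1 - (1 + \<beta>) * R)"
    using sector \<open>\<forall>x. 0 < f x\<close> unfolding \<beta>_def[symmetric]
    by (intro mult_left_mono) (auto simp: algebra_simps less_imp_le)
  moreover have "f R * (1 - (1 + \<beta>) * R) \<le> k - m / 2"
  proof (cases "1 - (1 + \<beta>) * R \<le> 0")
    case True
    then have "f R * (1 - (1 + \<beta>) * R) \<le> 0"
      using \<open>\<forall>x. 0 < f x\<close> by (simp add: mult_nonneg_nonpos less_imp_le)
    then show ?thesis
      using \<open>m \<le> k\<close> \<open>k > 1\<close> by linarith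
  next
    case False
    have "0 \<le> \<beta> * R"
      using \<open>0 < \<beta>\<close> \<open>0 \<le> R\<close> by simp
    moreover have "R + \<beta> * R < 1"
      using False by (simp add: algebra_simps)
    ultimately have "R \<in> {0..1}"
      using \<open>0 \<le> R\<close> by simp
    text \<open>Lowering the slope from the nullcline value \<open>1/(k - 1)\<close> to \<open>\<beta>\<close> costs at most \<open>F d \<le> m/2\<close>.\<close>
    have shift: "1 - (1 + \<beta>) * R = (1 - k * R / (k - 1)) + d * R"
      using \<open>k > 1\<close> unfolding \<beta>_def by (simp add: field_simps)
    have "0 < F"
      using F[OF \<open>R \<in> {0..1}\<close>] \<open>\<forall>x. 0 < f x\<close> by (meson less_le_trans)
    then have "f R * (d * R) \<le> F * (d * 1)"
      using F[OF \<open>R \<in> {0..1}\<close>] \<open>R \<in> {0..1}\<close> \<open>0 < d\<close> by (intro mult_mono mult_left_mono) auto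
    moreover have "f R * (1 - (1 + \<beta>) * R) = f R * (1 - k * R / (k - 1)) + f R * (d * R)"
      unfolding shift by (rule distrib_left)
    ultimately show ?thesis
      using nullcline[OF \<open>R \<in> {0..1}\<close>] \<open>F * d \<le> m / 2\<close> by simp
  qed
  ultimately show ?thesis
    by simp
qed

lemma infective_decay_sector:
  fixes f :: "real \<Rightarrow> real"
  assumes "k > 1" "f 0 < k" "continuous_on UNIV f" "\<forall>x. 0 < f x"
    and "\<forall>p\<in>Zreg. is_equilibrium f k p \<longrightarrow> p = (0, 0)"
  obtains \<beta> c where "0 < \<beta>" "\<beta> < 1 / (k - 1)" "0 < c"
    "\<And>I R. 0 \<le> I \<Longrightarrow> 0 \<le> R \<Longrightarrow> \<beta> * R \<le> I \<Longrightarrow> f R * (1 - I - R) - k \<le> - c"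
proof -
  obtain m where "0 < m" "m \<le> k"
    and nullcline: "\<And>R. R \<in> {0..1} \<Longrightarrow> f R * (1 - k * R / (k - 1)) \<le> k - m"
    using nullcline_rate_gap[OF assms] by blast
  obtain F where "0 < F" and F: "\<And>R. R \<in> {0..1} \<Longrightarrow> f R \<le> F"
    using bounded_above_on_Icc[OF continuous_on_subset[OF \<open>continuous_on UNIV f\<close>]] by blast
  define d where "d = min (1 / (2 * (k - 1))) (m / (2 * F))"
  have "0 < d"
    using \<open>k > 1\<close> \<open>0 < m\<close> \<open>0 < F\<close> unfolding d_def by simp
  have "d \<le> 1 / (2 * (k - 1))" "d \<le> m / (2 * F)"
    unfolding d_def by simp_all
  moreover have "1 / (2 * (k - 1)) < 1 / (k - 1)"
    using \<open>k > 1\<close> by (simp add: field_simps)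
  ultimately have "d < 1 / (k - 1)" "F * d \<le> m / 2"
    using \<open>0 < F\<close> by (simp_all add: field_simps)
  note sector = infective_rate_bound_in_sector[OF \<open>k > 1\<close> \<open>\<forall>x. 0 < f x\<close> \<open>m \<le> k\<close> \<open>0 < d\<close> this
      nullcline F]
  show thesis
  proof (rule that)
    show "0 < 1 / (k - 1) - d" "1 / (k - 1) - d < 1 / (k - 1)" "0 < m / 2"
      using \<open>d < 1 / (k - 1)\<close> \<open>0 < d\<close> \<open>0 < m\<close> by simp_all
  qed (rule sector)
qed

lemma infective_rate_bounded_above:
  fixes f :: "real \<Rightarrow> real"
  assumes "continuous_on UNIV f" "\<forall>x. 0 < f x"
  obtains F where "0 < F" "\<And>I R. 0 \<le> I \<Longrightarrow> 0 \<le> R \<Longrightarrow> f R * (1 - I - R) \<le> F"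
proof -
  obtain F where "0 < F" and F: "\<And>R. R \<in> {0..1} \<Longrightarrow> f R \<le> F"
    using bounded_above_on_Icc[OF continuous_on_subset[OF \<open>continuous_on UNIV f\<close>]] by blast
  have "f R * (1 - I - R) \<le> F" if "0 \<le> I" "0 \<le> R" for I R
  proof (cases "I + R \<le> 1")
    case True
    then have "f R * (1 - I - R) \<le> F * 1"
      using F[of R] that \<open>\<forall>x. 0 < f x\<close> \<open>0 < F\<close> by (intro mult_mono) (auto simp: less_imp_le)
    then show ?thesis
      by simp
  next
    case False
    then show ?thesis
      using \<open>\<forall>x. 0 < f x\<close> \<open>0 < F\<close> mult_pos_neg[of "f R" "1 - I - R"] by auto
  qed
  then show thesis
    using that \<open>0 < F\<close> by blast
qed

lemma quadrant_power_Lyapunov: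
  fixes f :: "real \<Rightarrow> real"
  assumes "k > 1" "f 0 < k" "continuous_on UNIV f" "\<forall>x. 0 < f x"
    and "\<forall>p\<in>Zreg. is_equilibrium f k p \<longrightarrow> p = (0, 0)"
  obtains \<beta> e :: real and n :: nat where "0 < \<beta>" "0 < e"
    "\<And>I R. 0 \<le> I \<Longrightarrow> 0 \<le> R \<Longrightarrow>
       I ^ n * (I * (f R * (1 - I - R) - k)) + (\<beta> * R) ^ n * (\<beta> * ((k - 1) * I - R))
         \<le> - e * (I ^ Suc n + (\<beta> * R) ^ Suc n)"
proof -
  obtain \<beta>\<^sub>1 c where "0 < \<beta>\<^sub>1" "\<beta>\<^sub>1 < 1 / (k - 1)" "0 < c"
    and I_decay: "\<And>I R. 0 \<le> I \<Longrightarrow> 0 \<le> R \<Longrightarrow> \<beta>\<^sub>1 * R \<le> I \<Longrightarrow> f R * (1 - I - R) - k \<le> - c"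
    using infective_decay_sector[OF assms] by blast
  obtain F where "0 < F" and F: "\<And>I R. 0 \<le> I \<Longrightarrow> 0 \<le> R \<Longrightarrow> f R * (1 - I - R) \<le> F"
    using infective_rate_bounded_above[OF assms(3,4)] by blast
  define \<beta>\<^sub>2 where "\<beta>\<^sub>2 = (\<beta>\<^sub>1 + 1 / (k - 1)) / 2"
  define \<delta> where "\<delta> = 1 - (k - 1) * \<beta>\<^sub>2"
  have "\<beta>\<^sub>1 < \<beta>\<^sub>2" "\<beta>\<^sub>2 < 1 / (k - 1)"
    using \<open>\<beta>\<^sub>1 < 1 / (k - 1)\<close> unfolding \<beta>\<^sub>2_def by (simp_all add: field_simps)
  then have "0 < \<delta>"
    using \<open>k > 1\<close> unfolding \<delta>_def by (simp add: field_simps)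
  have "0 \<le> k - 1"
    using \<open>k > 1\<close> by simp
  obtain \<beta> n where "0 < \<beta>" and Lyapunov: "\<And>x y X Y. 0 \<le> x \<Longrightarrow> 0 \<le> y \<Longrightarrow>
      (\<beta>\<^sub>1 * y \<le> x \<Longrightarrow> X \<le> - c * x) \<Longrightarrow> (x \<le> \<beta>\<^sub>2 * y \<Longrightarrow> Y \<le> - \<delta> * y) \<Longrightarrow>
      X \<le> F * x \<Longrightarrow> Y \<le> (k - 1) * x \<Longrightarrow>
      x ^ n * X + (\<beta> * y) ^ n * (\<beta> * Y) \<le> - (min c \<delta> / 4) * (x ^ Suc n + (\<beta> * y) ^ Suc n)"
    using weighted_power_sum_sector_Lyapunov[OF \<open>0 < c\<close> \<open>0 < \<delta>\<close> less_imp_le[OF \<open>0 < F\<close>]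
        \<open>0 \<le> k - 1\<close> \<open>0 < \<beta>\<^sub>1\<close> \<open>\<beta>\<^sub>1 < \<beta>\<^sub>2\<close>]
    by blast
  have "I ^ n * (I * (f R * (1 - I - R) - k)) + (\<beta> * R) ^ n * (\<beta> * ((k - 1) * I - R))
      \<le> - (min c \<delta> / 4) * (I ^ Suc n + (\<beta> * R) ^ Suc n)" if "0 \<le> I" "0 \<le> R" for I R
  proof (rule Lyapunov[OF that])
    show "I * (f R * (1 - I - R) - k) \<le> - c * I" if "\<beta>\<^sub>1 * R \<le> I"
      using I_decay[OF \<open>0 \<le> I\<close> \<open>0 \<le> R\<close> that] \<open>0 \<le> I\<close>
        mult_left_mono[of "f R * (1 - I - R) - k" "- c" I]
      by (simp add: mult.commute)
    show "(k - 1) * I - R \<le> - \<delta> * R" if "I \<le> \<beta>\<^sub>2 * R"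
      using that \<open>k > 1\<close> mult_left_mono[of I "\<beta>\<^sub>2 * R" "k - 1"] unfolding \<delta>_def
      by (simp add: algebra_simps)
    show "I * (f R * (1 - I - R) - k) \<le> F * I"
      using F[OF that] \<open>0 \<le> I\<close> \<open>k > 1\<close> mult_left_mono[of "f R * (1 - I - R) - k" F I]
      by (simp add: mult.commute)
    show "(k - 1) * I - R \<le> (k - 1) * I"
      using \<open>0 \<le> R\<close> by simp
  qed
  moreover have "0 < min c \<delta> / 4"
    using \<open>0 < c\<close> \<open>0 < \<delta>\<close> by simp
  ultimately show thesis
    using that \<open>0 < \<beta>\<close> by blast
qed

lemma tendsto_origin_from_quadrant:
  fixes f I R :: "real \<Rightarrow> real"
  assumes "k > 1" "f 0 < k" "continuous_on UNIV f" "\<forall>x. 0 < f x"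
    and "\<forall>p\<in>Zreg. is_equilibrium f k p \<longrightarrow> p = (0, 0)"
    and sol: "sys_sol f k I R {0..}" and "0 \<le> I 0" "0 \<le> R 0"
  shows "((\<lambda>t. (I t, R t)) \<longlongrightarrow> (0, 0)) at_top"
proof -
  obtain \<beta> e :: real and n :: nat where "0 < \<beta>" "0 < e" and Lyapunov:
    "\<And>I R. 0 \<le> I \<Longrightarrow> 0 \<le> R \<Longrightarrow>
       I ^ n * (I * (f R * (1 - I - R) - k)) + (\<beta> * R) ^ n * (\<beta> * ((k - 1) * I - R))
         \<le> - e * (I ^ Suc n + (\<beta> * R) ^ Suc n)"
    using quadrant_power_Lyapunov[OF assms(1-5)] by blast
  define V where "V s = I s ^ Suc n + (\<beta> * R s) ^ Suc n" for s
  have nonneg: "0 \<le> I s \<and> 0 \<le> R s" if "0 \<le> s" for s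
    using sys_sol_nonneg[OF sys_sol_subset[OF sol, of "{0..s}"]] assms(3,1,7,8) that by auto
  have decay: "V t \<le> V 0 * exp (- ((1 + real n) * e) * t)" if "0 \<le> t" for t
  proof (rule exp_decay_if_derivative_le[OF that])
    fix s assume "s \<in> {0..t}"
    then have "(I has_real_derivative I s * (f (R s) * (1 - I s - R s) - k)) (at s within {0..t})"
      and "(R has_real_derivative (k - 1) * I s - R s) (at s within {0..t})"
      using sys_sol_subset[OF sol, of "{0..t}"] unfolding sys_sol_def by auto
    then show "(V has_real_derivative
        (1 + real n) * (I s * (f (R s) * (1 - I s - R s) - k) * I s ^ n)
        + (1 + real n) * (\<beta> * ((k - 1) * I s - R s) * (\<beta> * R s) ^ n)) (at s within {0..t})"
      unfolding V_def by (intro DERIV_add DERIV_power_Suc DERIV_cmult)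
  next
    fix s assume "0 < s" "s < t"
    then have "(1 + real n) * (I s ^ n * (I s * (f (R s) * (1 - I s - R s) - k))
        + (\<beta> * R s) ^ n * (\<beta> * ((k - 1) * I s - R s))) \<le> (1 + real n) * (- e * V s)"
      using Lyapunov[of "I s" "R s"] nonneg[of s] unfolding V_def by (intro mult_left_mono) auto
    then show "(1 + real n) * (I s * (f (R s) * (1 - I s - R s) - k) * I s ^ n)
        + (1 + real n) * (\<beta> * ((k - 1) * I s - R s) * (\<beta> * R s) ^ n)
        \<le> - ((1 + real n) * e) * V s"
      by (simp add: algebra_simps)
  qed
  show ?thesis
  proof (rule tendsto_origin_if_power_sum_le_exp_decay)
    show "0 < Suc n" "0 < \<beta> ^ Suc n" "0 < (1 + real n) * e"
      using \<open>0 < \<beta>\<close> \<open>0 < e\<close> by simp_all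
    fix t :: real assume "0 \<le> t"
    have "\<bar>I t\<bar> ^ Suc n + \<beta> ^ Suc n * \<bar>R t\<bar> ^ Suc n = V t"
      using nonneg[OF \<open>0 \<le> t\<close>] unfolding V_def by (simp add: power_mult_distrib)
    then show "\<bar>I t\<bar> ^ Suc n + \<beta> ^ Suc n * \<bar>R t\<bar> ^ Suc n \<le> V 0 * exp (- ((1 + real n) * e) * t)"
      using decay[OF \<open>0 \<le> t\<close>] by simp
  qed
qed

theorem lemma4:
  fixes f :: "real \<Rightarrow> real" and k :: real
  assumes "k > 1"
    and "\<forall>x. f x > 0"
    and "\<forall>x. f differentiable (at x)"
    and "continuous_on UNIV (deriv f)"
    and "f 0 / k < 1"
    and "\<forall>p\<in>Zreg. is_equilibrium f k p \<longrightarrow> p = (0, 0)"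
  shows "origin_globally_stable f k"
proof -
  have f_cont: "continuous_on UNIV f"
    using assms(3) by (intro continuous_at_imp_continuous_on ballI differentiable_imp_continuous_within) auto
  have "f 0 < k"
    using assms(1,5) by (simp add: divide_less_eq)
  have "origin_las f k"
    using assms(1) \<open>f 0 < k\<close> f_cont
    by (intro origin_las_if_f0_less_k) (auto simp: continuous_on_eq_continuous_at)
  moreover have "((\<lambda>t. (I t, R t)) \<longlongrightarrow> (0, 0)) at_top"
    if "sys_sol f k I R {0..}" "(I 0, R 0) \<in> Zreg" for I R
    using tendsto_origin_from_quadrant[OF assms(1) \<open>f 0 < k\<close> f_cont assms(2,6) that(1)] that(2)
    unfolding Zreg_def by auto
  ultimately show ?thesis
    unfolding origin_globally_stable_def by blast
qed

end
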